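(* Let $(X,d,\kappa)$ be a digital metric space of finite diameter, where $d$ is any $\ell_p$ metric. Let $f: X \to X$ be a function. If $f$ is a Kannan contraction map with constant $\alpha$, or a Chatterjea contraction map with constant $\alpha$, where $0 < \alpha < \frac{1}{2\,\mathrm{diam}\, X}$, then $f$ is a constant function.
   Context: A digital metric space is a triple $(X,d,\kappa)$ with $X\subset\mathbb{Z}^n$, $\kappa$ an adjacency relation on $X$, and $d$ a metric on $X$. The $\ell_p$ metric ($1\le p\le\infty$) is $d(x,y) = (\sum_i |x_i-y_i|^p)^{1/p}$ for $p<\infty$ and $\max_i|x_i-y_i|$ for $p=\infty$. $\mathrm{diam}\, X = \max\{d(x,y) : x,y\in X\}$. $f$ is a Kannan contraction map with constant $\alpha \in (0,1/2)$ if $d(f(x),f(y)) \le \alpha[d(x,f(x)) + d(y,f(y))]$ for all $x,y \in X$. $f$ is a Chatterjea contraction map with constant $\alpha \in (0,1/2)$ if $d(f(x),f(y)) \le \alpha[d(x,f(y)) + d(y,f(x))]$ for all $x,y\in X$. *)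

theory Defs
  imports "HOL-Analysis.Analysis" "HOL-Library.Extended_Real"
begin

text \<open>Points of the digital image are integer vectors in Z^n, modelled as int ^ 'n
  (the dimension n = CARD('n) is arbitrary but fixed).\<close>

definition lp_dist :: "ereal \<Rightarrow> int ^ 'n \<Rightarrow> int ^ 'n \<Rightarrow> real" where
  "lp_dist p x y =
     (if p = \<infinity> then Max (range (\<lambda>i. real_of_int \<bar>x $ i - y $ i\<bar>))
      else (\<Sum>i\<in>UNIV. real_of_int \<bar>x $ i - y $ i\<bar> powr real_of_ereal p)
             powr (1 / real_of_ereal p))"

definition digital_diam :: "('a \<Rightarrow> 'a \<Rightarrow> real) \<Rightarrow> 'a set \<Rightarrow> real" where
  "digital_diam d X = Sup {d x y | x y. x \<in> X \<and> y \<in> X}"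

definition finite_diameter :: "('a \<Rightarrow> 'a \<Rightarrow> real) \<Rightarrow> 'a set \<Rightarrow> bool" where
  "finite_diameter d X \<longleftrightarrow> bdd_above {d x y | x y. x \<in> X \<and> y \<in> X}"

definition kannan_contraction ::
  "('a \<Rightarrow> 'a \<Rightarrow> real) \<Rightarrow> 'a set \<Rightarrow> ('a \<Rightarrow> 'a) \<Rightarrow> real \<Rightarrow> bool" where
  "kannan_contraction d X f \<alpha> \<longleftrightarrow> 0 < \<alpha> \<and> \<alpha> < 1/2 \<and>
     (\<forall>x\<in>X. \<forall>y\<in>X. d (f x) (f y) \<le> \<alpha> * (d x (f x) + d y (f y)))"

definition chatterjea_contraction ::
  "('a \<Rightarrow> 'a \<Rightarrow> real) \<Rightarrow> 'a set \<Rightarrow> ('a \<Rightarrow> 'a) \<Rightarrow> real \<Rightarrow> bool" where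
  "chatterjea_contraction d X f \<alpha> \<longleftrightarrow> 0 < \<alpha> \<and> \<alpha> < 1/2 \<and>
     (\<forall>x\<in>X. \<forall>y\<in>X. d (f x) (f y) \<le> \<alpha> * (d x (f y) + d y (f x)))"

end

theory Submission
  imports Defs
begin

text \<open>Distinct points of an integer lattice are at \<open>\<ell>\<^sub>p\<close>-distance at least 1, whereas
  both the Kannan and the Chatterjea condition bound the distance between any two values of
  \<open>f\<close> by \<open>2 \<alpha> diam X\<close>, which is less than 1. Hence all values of \<open>f\<close> coincide.\<close>

lemma lp_dist_ge_1:
  fixes u v :: "int ^ 'n"
  assumes p: "1 \<le> p" and "u \<noteq> v"
  shows "1 \<le> lp_dist p u v"
proof -
  obtain i where "u $ i \<noteq> v $ i" using \<open>u \<noteq> v\<close> by (metis vec_eq_iff)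
  then have coord: "1 \<le> real_of_int \<bar>u $ i - v $ i\<bar>" by simp
  show ?thesis
  proof (cases "p = \<infinity>")
    case True
    have "real_of_int \<bar>u $ i - v $ i\<bar> \<le> Max (range (\<lambda>i. real_of_int \<bar>u $ i - v $ i\<bar>))"
      by (rule Max_ge) auto
    with coord show ?thesis unfolding lp_dist_def if_P[OF True] by linarith
  next
    case False
    then obtain r where r: "p = ereal r" and "1 \<le> r" using p by (cases p) auto
    have "1 \<le> real_of_int \<bar>u $ i - v $ i\<bar> powr r"
      using coord \<open>1 \<le> r\<close> by (simp add: ge_one_powr_ge_zero)
    also have "\<dots> \<le> (\<Sum>j\<in>UNIV. real_of_int \<bar>u $ j - v $ j\<bar> powr r)"
      by (rule member_le_sum) auto
    finally have "1 \<le> (\<Sum>j\<in>UNIV. real_of_int \<bar>u $ j - v $ j\<bar> powr r) powr (1 / r)"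
      using \<open>1 \<le> r\<close> by (simp add: ge_one_powr_ge_zero)
    with r show ?thesis by (simp add: lp_dist_def)
  qed
qed

lemma dist_le_digital_diam:
  assumes "finite_diameter d X" and "x \<in> X" and "y \<in> X"
  shows "d x y \<le> digital_diam d X"
  unfolding digital_diam_def
  by (rule cSup_upper) (use assms in \<open>auto simp: finite_diameter_def\<close>)

lemma kannan_contraction_image_dist_le:
  assumes "kannan_contraction d X f \<alpha>" and "finite_diameter d X"
    and "\<forall>x\<in>X. f x \<in> X" and "x \<in> X" and "y \<in> X"
  shows "d (f x) (f y) \<le> 2 * \<alpha> * digital_diam d X"
proof -
  have "d (f x) (f y) \<le> \<alpha> * (d x (f x) + d y (f y))"
    using assms(1,4,5) by (auto simp: kannan_contraction_def)
  also have "\<dots> \<le> \<alpha> * (digital_diam d X + digital_diam d X)"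
    using assms by (intro mult_left_mono add_mono dist_le_digital_diam)
      (auto simp: kannan_contraction_def)
  finally show ?thesis by simp
qed

lemma chatterjea_contraction_image_dist_le:
  assumes "chatterjea_contraction d X f \<alpha>" and "finite_diameter d X"
    and "\<forall>x\<in>X. f x \<in> X" and "x \<in> X" and "y \<in> X"
  shows "d (f x) (f y) \<le> 2 * \<alpha> * digital_diam d X"
proof -
  have "d (f x) (f y) \<le> \<alpha> * (d x (f y) + d y (f x))"
    using assms(1,4,5) by (auto simp: chatterjea_contraction_def)
  also have "\<dots> \<le> \<alpha> * (digital_diam d X + digital_diam d X)"
    using assms by (intro mult_left_mono add_mono dist_le_digital_diam)
      (auto simp: chatterjea_contraction_def)
  finally show ?thesis by simp
qed

theorem mainTheorem6:
  fixes X :: "(int ^ 'n) set" and f :: "int ^ 'n \<Rightarrow> int ^ 'n"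
    and p :: ereal and \<alpha> :: real
  assumes "1 \<le> p"
    and "finite_diameter (lp_dist p) X"
    and "\<forall>x\<in>X. f x \<in> X"
    and "kannan_contraction (lp_dist p) X f \<alpha> \<or> chatterjea_contraction (lp_dist p) X f \<alpha>"
    and "0 < \<alpha>"
    and "2 * digital_diam (lp_dist p) X * \<alpha> < 1"
  shows "\<exists>c. \<forall>x\<in>X. f x = c"
proof -
  have "f x = f y" if "x \<in> X" and "y \<in> X" for x y
  proof (rule ccontr)
    assume "f x \<noteq> f y"
    then have "1 \<le> lp_dist p (f x) (f y)" using lp_dist_ge_1 assms(1) by blast
    moreover have "lp_dist p (f x) (f y) \<le> 2 * \<alpha> * digital_diam (lp_dist p) X"
      using assms(2-4) that
      by (metis kannan_contraction_image_dist_le chatterjea_contraction_image_dist_le)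
    ultimately show False using assms(6) by (simp add: mult.commute mult.left_commute)
  qed
  then show ?thesis by blast
qed

end
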